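(* Consider the $n$-body problem in ${\bf H}^2$ with all masses equal to $m>0$, $n\ge2$, and let $\alpha_i=2\pi i/n$. For every $m>0$ and every $z>1$ there exist $\omega>0$ and $\omega<0$ such that ${\bf q}_i(t)=(\rho\cos(\omega t+\alpha_i),\rho\sin(\omega t+\alpha_i), z)$, $\rho=(z^2-1)^{1/2}$, $i=1,\dots,n$, is a solution of the equations of motion (an elliptic relative equilibrium in which the regular $n$-gon rotates in the plane $z=$ constant).
   Context: The $n$-body problem in ${\bf H}^2$ (Weierstrass model): with the Lorentz inner product ${\bf a}\boxdot{\bf b}=a_xb_x+a_yb_y-a_zb_z$ on $\mathbb R^3$, ${\bf H}^2=\{(x,y,z): x^2+y^2-z^2=-1,\ z>0\}$. Bodies of masses $m_1,\dots,m_n>0$ have positions ${\bf q}_i=(x_i,y_i,z_i)\in{\bf H}^2$ and satisfy $$\ddot{\bf q}_i=\sum_{j\ne i}\frac{m_j[{\bf q}_j+({\bf q}_i\boxdot{\bf q}_j){\bf q}_i]}{[({\bf q}_i\boxdot{\bf q}_j)^2-1]^{3/2}}+(\dot{\bf q}_i\boxdot\dot{\bf q}_i){\bf q}_i,\qquad {\bf q}_i\boxdot{\bf q}_i=-1,\ \ {\bf q}_i\boxdot\dot{\bf q}_i=0,$$ $i=1,\dots,n$, defined only for collisionless configurations (${\bf q}_i\ne{\bf q}_j$ for $i\ne j$). *)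

theory Defs
  imports "HOL-Analysis.Analysis"
begin

type_synonym vec3 = "real \<times> real \<times> real"

fun lor :: "vec3 \<Rightarrow> vec3 \<Rightarrow> real" where
  "lor (a1, a2, a3) (b1, b2, b3) = a1 * b1 + a2 * b2 - a3 * b3"

text \<open>Bodies are indexed by 1..n; q i t is the position of body i at time t.
  A solution (defined for all real times) of the n-body problem in H^2
  with masses mass 1, ..., mass n.\<close>
definition is_solution ::
  "nat \<Rightarrow> (nat \<Rightarrow> real) \<Rightarrow> (nat \<Rightarrow> real \<Rightarrow> vec3) \<Rightarrow> bool" where
  "is_solution n mass q \<longleftrightarrow>
     (\<exists>q' q'' :: nat \<Rightarrow> real \<Rightarrow> vec3. \<forall>t. \<forall>i\<in>{1..n}.
        (q i has_vector_derivative q' i t) (at t) \<and>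
        (q' i has_vector_derivative q'' i t) (at t) \<and>
        lor (q i t) (q i t) = -1 \<and> snd (snd (q i t)) > 0 \<and>
        lor (q i t) (q' i t) = 0 \<and>
        (\<forall>j\<in>{1..n}. j \<noteq> i \<longrightarrow> q j t \<noteq> q i t) \<and>
        q'' i t =
          (\<Sum>j\<in>{1..n} - {i}.
             (mass j / (((lor (q i t) (q j t))\<^sup>2 - 1) powr (3/2))) *\<^sub>R
               (q j t + lor (q i t) (q j t) *\<^sub>R q i t))
          + lor (q' i t) (q' i t) *\<^sub>R q i t)"

end

theory Submission imports Defs begin

(* The proof has three parts.
   (1) Kinematics: the velocity and acceleration of a uniformly rotating point are
       explicit, the Lorentz product of two such points depends only on their angular
       separation d, namely rho^2 cos d - z^2, and it is < -1 when cos d < 1, so the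
       bodies never collide and all interaction denominators are positive.
   (2) Polygon sums: summing over the other vertices amounts to summing over the
       separations 2 pi k / n, k = 1..n-1; the odd (sine) parts cancel and the even
       parts add up to a positive constant polygon_K n z.  Hence the total force on
       each body is radial-plus-vertical with magnitude proportional to polygon_K n z.
   (3) Matching the equations of motion, all three components reduce to the single
       condition omega^2 = m * polygon_K n z, solved by omega = +/- sqrt (m K). *)

lemma has_vector_derivative_triple:
  assumes "(f has_real_derivative a) (at t)" "(g has_real_derivative b) (at t)"
    "(h has_real_derivative c) (at t)"
  shows "((\<lambda>t. (f t, g t, h t)) has_vector_derivative (a, b, c)) (at t)"
proof -
  have "((\<lambda>t. (f t, g t, h t)) has_derivative (\<lambda>x. (a * x, b * x, c * x))) (at t)"
    using assms unfolding has_field_derivative_def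
    by (intro has_derivative_Pair) auto
  moreover have "(\<lambda>x. (a * x, b * x, c * x)) = (\<lambda>x::real. x *\<^sub>R (a, b, c))"
    by (auto simp: fun_eq_iff)
  ultimately show ?thesis unfolding has_vector_derivative_def by simp
qed

lemma sum_triple: "(\<Sum>j\<in>A. (f j, g j, h j)) = (sum f A, sum g A, sum h A)"
  by (simp add: fst_sum snd_sum prod_eq_iff)

section \<open>Sums over the vertices of a regular polygon\<close>

lemma sum_polygon_shift:
  fixes g :: "real \<Rightarrow> real" and n i :: nat
  assumes per: "\<And>x. g (x + 2*pi) = g x" and i: "i \<in> {1..n}"
  shows "(\<Sum>j\<in>{1..n} - {i}. g (2*pi*(real j - real i)/real n))
       = (\<Sum>k\<in>{1..n-1}. g (2*pi*real k/real n))"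
proof (rule sum.reindex_bij_witness[where i="\<lambda>k. if k + i \<le> n then k + i else k + i - n"
      and j="\<lambda>j. if j > i then j - i else j + n - i"])
  fix j assume j: "j \<in> {1..n} - {i}"
  show "(if j > i then j - i else j + n - i) \<in> {1..n - 1}" using j i by auto
  show "(if (if j > i then j - i else j + n - i) + i \<le> n then (if j > i then j - i else j + n - i) + i
        else (if j > i then j - i else j + n - i) + i - n) = j" using j i by auto
  show "g (2*pi*real (if j > i then j - i else j + n - i)/real n) = g (2*pi*(real j - real i)/real n)"
  proof (cases "j > i")
    case True then show ?thesis by simp
  next
    case False
    have "2*pi*real (j + n - i)/real n = 2*pi*(real j - real i)/real n + 2*pi"
      using False i by (simp add: field_simps)
    then show ?thesis using False per by simp
  qed
next
  fix k assume k: "k \<in> {1..n-1}"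
  show "(if k + i \<le> n then k + i else k + i - n) \<in> {1..n} - {i}" using k i by auto
  show "(if (if k + i \<le> n then k + i else k + i - n) > i then (if k + i \<le> n then k + i else k + i - n) - i
      else (if k + i \<le> n then k + i else k + i - n) + n - i) = k" using k i by auto
qed

text \<open>An odd 2 pi-periodic function sums to zero over the polygon angles, since the
  angles 2 pi k / n and 2 pi (n - k) / n cancel in pairs.\<close>
lemma sum_polygon_odd_zero:
  fixes h :: "real \<Rightarrow> real" and n :: nat
  assumes per: "\<And>x. h (x + 2*pi) = h x" and odd: "\<And>x. h (-x) = - h x"
  shows "(\<Sum>k\<in>{1..n-1}. h (2*pi*real k/real n)) = 0"
proof -
  have "(\<Sum>k\<in>{1..n-1}. h (2*pi*real k/real n)) = (\<Sum>k\<in>{1..n-1}. h (2*pi*real (n - k)/real n))"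
    by (rule sum.reindex_bij_witness[where i="\<lambda>k. n - k" and j="\<lambda>k. n - k"]) auto
  also have "\<dots> = (\<Sum>k\<in>{1..n-1}. - h (2*pi*real k/real n))"
  proof (rule sum.cong)
    fix k assume k: "k \<in> {1..n-1}"
    then have "real n > 0" "k \<le> n" by auto
    then have "2*pi*real (n - k)/real n = - (2*pi*real k/real n) + 2*pi"
      by (simp add: field_simps)
    then show "h (2*pi*real (n - k)/real n) = - h (2*pi*real k/real n)"
      using per[of "- (2*pi*real k/real n)"] odd by simp
  qed simp
  finally show ?thesis by (simp add: sum_negf)
qed

text \<open>Distinct vertices have distinct angles modulo 2 pi: the separation of two
  different indices in 1..n is not a multiple of n.\<close>
lemma cos_polygon_separation_lt_1:
  fixes n i j :: nat
  assumes "i \<in> {1..n}" "j \<in> {1..n}" "j \<noteq> i"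
  shows "cos (2*pi*(real j - real i)/real n) < 1"
proof -
  have "cos (2*pi*(real j - real i)/real n) \<noteq> 1"
  proof
    assume "cos (2*pi*(real j - real i)/real n) = 1"
    then obtain k :: int where k: "2*pi*(real j - real i)/real n = k * 2 * pi"
      by (auto simp: cos_one_2pi_int)
    have "real n > 0" using assms by auto
    then have "2*pi*(real j - real i) = 2*pi*(real_of_int k * real n)"
      using k by (simp add: field_simps)
    then have "real j - real i = real_of_int k * real n" by simp
    then have e: "int j - int i = k * int n"
      by (metis of_int_eq_iff of_int_mult of_int_of_nat_eq of_int_diff)
    have lt: "\<bar>int j - int i\<bar> < int n" "int j \<noteq> int i" using assms by auto
    then have "\<bar>k\<bar> * int n < 1 * int n" using e by (simp add: abs_mult)
    then have "\<bar>k\<bar> < 1" using mult_less_cancel_right[of "\<bar>k\<bar>" "int n" 1] by linarith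
    then have "k = 0" by simp
    then show False using e lt by simp
  qed
  then show ?thesis using cos_le_one by (metis order_less_le)
qed

corollary cos_polygon_angle_lt_1:
  assumes "k \<in> {1..n-1}"
  shows "cos (2*pi*real k/real n) < 1"
proof -
  have "real n > 0" using assms by auto
  then have "2*pi*real k/real n = 2*pi*(real k - real n)/real n + 2*pi"
    by (simp add: field_simps)
  then show ?thesis
    using cos_polygon_separation_lt_1[of n n k] assms by auto
qed

definition circle_pt :: "real \<Rightarrow> real \<Rightarrow> real \<Rightarrow> vec3" where
  "circle_pt \<rho> z \<theta> = (\<rho> * cos \<theta>, \<rho> * sin \<theta>, z)"

lemma lor_circle_pt:
  "lor (circle_pt \<rho> z a) (circle_pt \<rho> z (a + d)) = \<rho>\<^sup>2 * cos d - z\<^sup>2"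
proof -
  have "cos d = cos (a + d) * cos a + sin (a + d) * sin a"
    using cos_diff[of "a + d" a] by simp
  then show ?thesis by (simp add: circle_pt_def power2_eq_square algebra_simps)
qed

text \<open>If the circle lies on H^2 (rho^2 = z^2 - 1) and the separation is not a multiple
  of 2 pi, the Lorentz product is < -1, i.e. the hyperbolic distance is positive.\<close>
lemma lor_separation_lt_minus_1:
  fixes \<rho> z d :: real
  assumes "\<rho>\<^sup>2 = z\<^sup>2 - 1" "\<rho> \<noteq> 0" "cos d < 1"
  shows "\<rho>\<^sup>2 * cos d - z\<^sup>2 < -1"
proof -
  have "\<rho>\<^sup>2 > 0" using assms(2) by simp
  then have "\<rho>\<^sup>2 * (1 - cos d) > 0" using assms(3) by (simp del: zero_less_power2)
  moreover have "\<rho>\<^sup>2 * cos d - z\<^sup>2 = -1 - \<rho>\<^sup>2 * (1 - cos d)"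
    using assms(1) by (simp add: algebra_simps)
  ultimately show ?thesis by linarith
qed

text \<open>The interaction denominator ((q_i . q_j)^2 - 1)^(3/2) for two bodies on the
  circle of height z at angular separation x.\<close>
definition pair_denom :: "real \<Rightarrow> real \<Rightarrow> real" where
  "pair_denom z x = (((z\<^sup>2 - 1) * cos x - z\<^sup>2)\<^sup>2 - 1) powr (3/2)"

lemma pair_denom_pos:
  assumes "z > 1" "cos x < 1"
  shows "pair_denom z x > 0"
proof -
  have "z\<^sup>2 - 1 > 0" using assms(1) by simp
  then have "sqrt (z\<^sup>2 - 1) \<noteq> 0" "(sqrt (z\<^sup>2 - 1))\<^sup>2 = z\<^sup>2 - 1" by simp_all
  then have L: "(z\<^sup>2 - 1) * cos x - z\<^sup>2 < -1"
    using lor_separation_lt_minus_1[OF _ _ assms(2)] by metis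
  then have "(((z\<^sup>2 - 1) * cos x - z\<^sup>2) - 1) * (((z\<^sup>2 - 1) * cos x - z\<^sup>2) + 1) > 0"
    by (intro mult_neg_neg) auto
  then have "((z\<^sup>2 - 1) * cos x - z\<^sup>2)\<^sup>2 > 1"
    by (simp add: power2_eq_square algebra_simps)
  then show ?thesis unfolding pair_denom_def by simp
qed

text \<open>The constant governing the angular velocity of the rotating n-gon.\<close>
definition polygon_K :: "nat \<Rightarrow> real \<Rightarrow> real" where
  "polygon_K n z = (\<Sum>k\<in>{1..n-1}. (1 - cos (2*pi*real k/real n)) / pair_denom z (2*pi*real k/real n))"

lemma polygon_K_pos:
  assumes "n \<ge> 2" "z > 1"
  shows "polygon_K n z > 0"
  unfolding polygon_K_def
proof (rule sum_pos)
  show "finite {1..n-1}" "{1..n-1} \<noteq> {}" using assms(1) by auto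
  fix k assume "k \<in> {1..n-1}"
  then have c: "cos (2*pi*real k/real n) < 1" by (rule cos_polygon_angle_lt_1)
  then show "(1 - cos (2*pi*real k/real n)) / pair_denom z (2*pi*real k/real n) > 0"
    using pair_denom_pos[OF assms(2) c] by simp
qed

section \<open>The force exerted on one vertex\<close>

text \<open>The gravitational pull of a body at angle a + d on a body at angle a, split into
  an even part (1 - cos d)/D and an odd part sin d/D in the separation d.\<close>
lemma pair_force:
  fixes \<rho> z m D a d :: real
  assumes "\<rho>\<^sup>2 = z\<^sup>2 - 1"
  defines "L \<equiv> \<rho>\<^sup>2 * cos d - z\<^sup>2"
  shows "(m / D) *\<^sub>R (circle_pt \<rho> z (a + d) + L *\<^sub>R circle_pt \<rho> z a) =
    (cos a * (-m * \<rho> * z\<^sup>2) * ((1 - cos d)/D) - sin a * (\<rho> * m) * (sin d/D),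
     sin a * (-m * \<rho> * z\<^sup>2) * ((1 - cos d)/D) + cos a * (\<rho> * m) * (sin d/D),
     -m * z * \<rho>\<^sup>2 * ((1 - cos d)/D))"
proof -
  have z2: "z\<^sup>2 = \<rho>\<^sup>2 + 1" using assms by simp
  show ?thesis unfolding circle_pt_def L_def cos_add sin_add divide_inverse z2
    by (simp add: algebra_simps power2_eq_square)
qed

text \<open>Summing over all other vertices of the regular n-gon, the odd parts cancel and
  the force on the body at angle a is a multiple of polygon_K n z.\<close>
lemma polygon_force:
  fixes n i :: nat and m z \<rho> a :: real and \<theta> :: "nat \<Rightarrow> real"
  assumes rho: "\<rho>\<^sup>2 = z\<^sup>2 - 1" and i: "i \<in> {1..n}"
    and \<theta>: "\<And>j. \<theta> j = a + 2*pi*(real j - real i)/real n"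
  shows "(\<Sum>j\<in>{1..n} - {i}.
            (m / ((lor (circle_pt \<rho> z a) (circle_pt \<rho> z (\<theta> j)))\<^sup>2 - 1) powr (3/2)) *\<^sub>R
            (circle_pt \<rho> z (\<theta> j) + lor (circle_pt \<rho> z a) (circle_pt \<rho> z (\<theta> j)) *\<^sub>R circle_pt \<rho> z a))
       = (cos a * (-m * \<rho> * z\<^sup>2) * polygon_K n z, sin a * (-m * \<rho> * z\<^sup>2) * polygon_K n z,
          -m * z * \<rho>\<^sup>2 * polygon_K n z)"
proof -
  define dl where "dl = (\<lambda>j::nat. 2*pi*(real j - real i)/real n)"
  define A where "A = (\<lambda>j. (1 - cos (dl j)) / pair_denom z (dl j))"
  define B where "B = (\<lambda>j. sin (dl j) / pair_denom z (dl j))"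
  have per: "pair_denom z (x + 2*pi) = pair_denom z x" for x by (simp add: pair_denom_def)
  have SA: "(\<Sum>j\<in>{1..n} - {i}. A j) = polygon_K n z"
    unfolding A_def dl_def polygon_K_def
    by (rule sum_polygon_shift[OF _ i, where g="\<lambda>x. (1 - cos x) / pair_denom z x"]) (simp add: per)
  have "(\<Sum>j\<in>{1..n} - {i}. B j) = (\<Sum>k\<in>{1..n-1}. sin (2*pi*real k/real n) / pair_denom z (2*pi*real k/real n))"
    unfolding B_def dl_def
    by (rule sum_polygon_shift[OF _ i, where g="\<lambda>x. sin x / pair_denom z x"]) (simp add: per)
  also have "\<dots> = 0"
    by (rule sum_polygon_odd_zero) (simp_all add: per pair_denom_def)
  finally have SB: "(\<Sum>j\<in>{1..n} - {i}. B j) = 0" .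
  have denom: "((\<rho>\<^sup>2 * cos x - z\<^sup>2)\<^sup>2 - 1) powr (3/2) = pair_denom z x" for x
    using rho by (simp add: pair_denom_def)
  have "(\<Sum>j\<in>{1..n} - {i}.
            (m / ((lor (circle_pt \<rho> z a) (circle_pt \<rho> z (\<theta> j)))\<^sup>2 - 1) powr (3/2)) *\<^sub>R
            (circle_pt \<rho> z (\<theta> j) + lor (circle_pt \<rho> z a) (circle_pt \<rho> z (\<theta> j)) *\<^sub>R circle_pt \<rho> z a))
      = (\<Sum>j\<in>{1..n} - {i}. (cos a * (-m * \<rho> * z\<^sup>2) * A j - sin a * (\<rho> * m) * B j,
            sin a * (-m * \<rho> * z\<^sup>2) * A j + cos a * (\<rho> * m) * B j, -m * z * \<rho>\<^sup>2 * A j))"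
    unfolding \<theta> lor_circle_pt A_def B_def dl_def denom[symmetric]
    by (intro sum.cong refl pair_force[OF rho])
  also have "\<dots> = (cos a * (-m * \<rho> * z\<^sup>2) * polygon_K n z, sin a * (-m * \<rho> * z\<^sup>2) * polygon_K n z,
          -m * z * \<rho>\<^sup>2 * polygon_K n z)"
    unfolding sum_triple sum_subtractf sum.distrib sum_distrib_left[symmetric] SA SB by simp
  finally show ?thesis .
qed

lemma circle_pt_velocity:
  fixes \<rho> z \<omega> c t :: real
  shows "((\<lambda>t. circle_pt \<rho> z (\<omega> * t + c)) has_vector_derivative
      (- \<rho> * \<omega> * sin (\<omega> * t + c), \<rho> * \<omega> * cos (\<omega> * t + c), 0)) (at t)"
  unfolding circle_pt_def by (rule has_vector_derivative_triple) (auto intro!: derivative_eq_intros)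

lemma circle_pt_acceleration:
  fixes \<rho> \<omega> c t :: real
  shows "((\<lambda>t. (- \<rho> * \<omega> * sin (\<omega> * t + c), \<rho> * \<omega> * cos (\<omega> * t + c), 0::real))
      has_vector_derivative (- \<rho> * \<omega>\<^sup>2 * cos (\<omega> * t + c), - \<rho> * \<omega>\<^sup>2 * sin (\<omega> * t + c), 0)) (at t)"
  by (rule has_vector_derivative_triple) (auto intro!: derivative_eq_intros simp: power2_eq_square)

lemma rotating_body_equation:
  fixes \<rho> z \<omega> m K a :: real
  assumes rho: "\<rho>\<^sup>2 = z\<^sup>2 - 1" and om: "\<omega>\<^sup>2 = m * K"
  shows "(- \<rho> * \<omega>\<^sup>2 * cos a, - \<rho> * \<omega>\<^sup>2 * sin a, 0)
       = (cos a * (-m * \<rho> * z\<^sup>2) * K, sin a * (-m * \<rho> * z\<^sup>2) * K, -m * z * \<rho>\<^sup>2 * K)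
         + lor (- \<rho> * \<omega> * sin a, \<rho> * \<omega> * cos a, 0) (- \<rho> * \<omega> * sin a, \<rho> * \<omega> * cos a, 0)
           *\<^sub>R circle_pt \<rho> z a"
proof -
  have "lor (- \<rho> * \<omega> * sin a, \<rho> * \<omega> * cos a, 0) (- \<rho> * \<omega> * sin a, \<rho> * \<omega> * cos a, 0)
      = \<rho>\<^sup>2 * \<omega>\<^sup>2"
    using sin_cos_squared_add[of a] by (simp add: power2_eq_square)
      (metis distrib_left mult.commute mult.left_commute mult_1_right)
  then have speed: "lor (- \<rho> * \<omega> * sin a, \<rho> * \<omega> * cos a, 0) (- \<rho> * \<omega> * sin a, \<rho> * \<omega> * cos a, 0)
      = \<rho>\<^sup>2 * (m * K)" unfolding om .
  have z2: "z\<^sup>2 = \<rho>\<^sup>2 + 1" using rho by simp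
  show ?thesis
    unfolding circle_pt_def speed om z2 by (simp add: algebra_simps power2_eq_square)
qed

theorem rotating_polygon_solution:
  fixes n :: nat and m z \<rho> \<omega> :: real
  assumes z: "z > 1" and rho: "\<rho>\<^sup>2 = z\<^sup>2 - 1" "\<rho> > 0"
    and om: "\<omega>\<^sup>2 = m * polygon_K n z"
  shows "is_solution n (\<lambda>_. m) (\<lambda>i t. circle_pt \<rho> z (\<omega> * t + 2*pi*real i/real n))"
proof -
  define a where "a i t = \<omega> * t + 2*pi*real i/real n" for i :: nat and t :: real
  define q where "q i t = circle_pt \<rho> z (a i t)" for i t
  define v where "v i t = (- \<rho> * \<omega> * sin (a i t), \<rho> * \<omega> * cos (a i t), 0::real)" for i t
  define acc where "acc i t = (- \<rho> * \<omega>\<^sup>2 * cos (a i t), - \<rho> * \<omega>\<^sup>2 * sin (a i t), 0::real)"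
    for i t
  have shift: "a j t = a i t + 2*pi*(real j - real i)/real n" for i j t
    by (simp add: a_def diff_divide_distrib right_diff_distrib)
  have "(q i has_vector_derivative v i t) (at t) \<and> (v i has_vector_derivative acc i t) (at t) \<and>
        lor (q i t) (q i t) = -1 \<and> snd (snd (q i t)) > 0 \<and> lor (q i t) (v i t) = 0 \<and>
        (\<forall>j\<in>{1..n}. j \<noteq> i \<longrightarrow> q j t \<noteq> q i t) \<and>
        acc i t = (\<Sum>j\<in>{1..n} - {i}. (m / (((lor (q i t) (q j t))\<^sup>2 - 1) powr (3/2))) *\<^sub>R
                     (q j t + lor (q i t) (q j t) *\<^sub>R q i t))
                  + lor (v i t) (v i t) *\<^sub>R q i t"
    if i: "i \<in> {1..n}" for i t
  proof (intro conjI ballI impI)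
    show "(q i has_vector_derivative v i t) (at t)" "(v i has_vector_derivative acc i t) (at t)"
      unfolding q_def v_def acc_def a_def by (rule circle_pt_velocity circle_pt_acceleration)+
    show on_H2: "lor (q i t) (q i t) = -1"
      using lor_circle_pt[of \<rho> z "a i t" 0] rho by (simp add: q_def)
    show "snd (snd (q i t)) > 0" using z by (simp add: q_def circle_pt_def)
    show "lor (q i t) (v i t) = 0" by (simp add: q_def v_def circle_pt_def algebra_simps)
    fix j assume j: "j \<in> {1..n}" "j \<noteq> i"
    have "lor (q i t) (q j t) < -1"
      unfolding q_def shift[of j t i] lor_circle_pt using rho
      by (intro lor_separation_lt_minus_1 cos_polygon_separation_lt_1 i j) auto
    then show "q j t \<noteq> q i t" using on_H2 by auto
  next
    show "acc i t = (\<Sum>j\<in>{1..n} - {i}. (m / (((lor (q i t) (q j t))\<^sup>2 - 1) powr (3/2))) *\<^sub>R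
                     (q j t + lor (q i t) (q j t) *\<^sub>R q i t))
                  + lor (v i t) (v i t) *\<^sub>R q i t"
      unfolding q_def v_def acc_def polygon_force[OF rho(1) i shift[of _ t i]]
      by (rule rotating_body_equation[OF rho(1) om])
  qed
  then show ?thesis unfolding is_solution_def q_def a_def by blast
qed

theorem mainTheorem13:
  fixes n :: nat and m z :: real
  assumes "n \<ge> 2" and "m > 0" and "z > 1"
  shows "(\<exists>\<omega>>0. is_solution n (\<lambda>_. m)
            (\<lambda>i t. (sqrt (z\<^sup>2 - 1) * cos (\<omega> * t + 2 * pi * real i / real n),
                     sqrt (z\<^sup>2 - 1) * sin (\<omega> * t + 2 * pi * real i / real n), z))) \<and>
         (\<exists>\<omega><0. is_solution n (\<lambda>_. m)
            (\<lambda>i t. (sqrt (z\<^sup>2 - 1) * cos (\<omega> * t + 2 * pi * real i / real n),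
                     sqrt (z\<^sup>2 - 1) * sin (\<omega> * t + 2 * pi * real i / real n), z)))"
proof -
  have "z\<^sup>2 - 1 > 0" using assms(3) by simp
  then have rho: "(sqrt (z\<^sup>2 - 1))\<^sup>2 = z\<^sup>2 - 1" "sqrt (z\<^sup>2 - 1) > 0" by simp_all
  define w where "w = sqrt (m * polygon_K n z)"
  have "m * polygon_K n z > 0" using polygon_K_pos[OF assms(1,3)] assms(2) by simp
  then have w: "w > 0" "w\<^sup>2 = m * polygon_K n z" "(-w)\<^sup>2 = m * polygon_K n z"
    unfolding w_def by simp_all
  show ?thesis
    using rotating_polygon_solution[OF assms(3) rho w(2)]
      rotating_polygon_solution[OF assms(3) rho w(3)] w(1)
    unfolding circle_pt_def by (intro conjI exI[of _ w] exI[of _ "-w"]) auto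
qed

end
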